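(* Let $q$ be a prime power, $n\ge1$, and $k$ an integer with $\frac{q-1}{2}<k<q-1$. Then \[\dim(\operatorname{Hull}(C_{n,k}^q))=\dim(C_{n,k}^q)-(2k+1-(q-1))=\binom{n+k}{k}-(2k+1-(q-1)).\] Moreover, $\{\operatorname{ev}(m)\}_{m\in\mathcal{M}}$ is a basis of $\operatorname{Hull}(C_{n,k}^q)$, where $\mathcal{M}$ is the set of all monomials of degree $k$ in $x_0,\dots,x_n$ except the monomials $x_{n-1}^{k-a}x_n^{a}$ with $q-1-k\le a\le k$.
   Context: For a prime power $q$ and integers $n\ge 1$, $k\ge 0$, the projective Reed-Muller code $C_{n,k}^q\subseteq \mathbb{F}_q^N$, $N=\frac{q^{n+1}-1}{q-1}$, is defined as follows. For each point of $\mathbb{P}^n(\mathbb{F}_q)$ choose the affine representative $(p_0,\dots,p_n)\in\mathbb{F}_q^{n+1}\setminus\{0\}$ whose left-most nonzero coordinate equals $1$, and fix an ordering $P_1',\dots,P_N'$ of these representatives; for a polynomial $F$ write $\operatorname{ev}(F)=(F(P_1'),\dots,F(P_N'))$. Then $C_{n,k}^q=\{\operatorname{ev}(F) : F\in \mathbb{F}_q[x_0,\dots,x_n]_k\}$, where $\mathbb{F}_q[x_0,\dots,x_n]_k$ is the space of homogeneous polynomials of degree $k$ together with $0$. Duals are with respect to the standard dot product, and $\operatorname{Hull}(C)=C\cap C^\perp$. *)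

theory Defs
  imports Complex_Main "HOL-Library.Function_Algebras"
begin

text \<open>Codewords of length N are modelled as functions on the set of normalized
representatives of points of P^n(F_q), extended by 0 outside this set.\<close>

definition proj_points :: "nat \<Rightarrow> (nat \<Rightarrow> 'a::field) set" where
  "proj_points n = {p. (\<forall>i>n. p i = 0) \<and>
      (\<exists>i\<le>n. p i = 1 \<and> (\<forall>j<i. p j = 0))}"

definition fscale :: "'a::field \<Rightarrow> ('b \<Rightarrow> 'a) \<Rightarrow> ('b \<Rightarrow> 'a)" where
  "fscale c f = (\<lambda>x. c * f x)"

lemma vector_space_fscale: "vector_space (fscale :: 'a::field \<Rightarrow> _)"
  by unfold_locales (auto simp: fscale_def algebra_simps)

definition monomials :: "nat \<Rightarrow> nat \<Rightarrow> (nat \<Rightarrow> nat) set" where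
  "monomials n k = {e. (\<forall>i>n. e i = 0) \<and> (\<Sum>i\<le>n. e i) = k}"

definition ev_mon :: "nat \<Rightarrow> (nat \<Rightarrow> nat) \<Rightarrow> ((nat \<Rightarrow> 'a::field) \<Rightarrow> 'a)" where
  "ev_mon n e = (\<lambda>p. if p \<in> proj_points n then (\<Prod>i\<le>n. p i ^ e i) else 0)"

definition PRM :: "nat \<Rightarrow> nat \<Rightarrow> ((nat \<Rightarrow> 'a::field) \<Rightarrow> 'a) set" where
  "PRM n k = module.span fscale (ev_mon n ` monomials n k)"

definition dual_code :: "nat \<Rightarrow> ((nat \<Rightarrow> 'a::field) \<Rightarrow> 'a) set \<Rightarrow> ((nat \<Rightarrow> 'a) \<Rightarrow> 'a) set" where
  "dual_code n C = {v. (\<forall>p. p \<notin> proj_points n \<longrightarrow> v p = 0) \<and>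
      (\<forall>u\<in>C. (\<Sum>p\<in>proj_points n. u p * v p) = 0)}"

definition code_hull :: "nat \<Rightarrow> ((nat \<Rightarrow> 'a::field) \<Rightarrow> 'a) set \<Rightarrow> ((nat \<Rightarrow> 'a) \<Rightarrow> 'a) set" where
  "code_hull n C = C \<inter> dual_code n C"

definition dimF :: "((nat \<Rightarrow> 'a::field) \<Rightarrow> 'a) set \<Rightarrow> nat" where
  "dimF S = vector_space.dim fscale S"

definition excl_mon :: "nat \<Rightarrow> nat \<Rightarrow> nat \<Rightarrow> (nat \<Rightarrow> nat)" where
  "excl_mon n k a = (\<lambda>i. if i = n then a else if i = n - 1 then k - a else 0)"

end

theory Submission
  imports Defs "HOL-Computational_Algebra.Polynomial" "HOL-Library.FuncSet"
begin

text \<open>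
  Inner products of evaluation vectors of monomials reduce to power sums \<open>\<Sum>\<^sub>t t^m\<close>
  over \<open>F_q\<close>, which vanish unless \<open>m > 0\<close> and \<open>q - 1\<close> divides \<open>m\<close>. Splitting \<open>P^n\<close> by
  the position of the leading 1, and using that the exponents of two monomials of
  degree \<open>k < q - 1\<close> add up to less than \<open>2(q - 1)\<close>, one finds that \<open>ev(x^e)\<close> and
  \<open>ev(x^f)\<close> are orthogonal unless they are \<open>x_{n-1}^{k-a} x_n^a\<close> and \<open>x_{n-1}^{k-b} x_n^b\<close>
  with \<open>a + b = q - 1\<close> (pairing \<open>-1\<close>) or \<open>a = b = k\<close> (pairing \<open>1\<close>). Hence every
  monomial outside the excluded family lies in the hull, while the Gram matrix of the
  excluded family is an anti-diagonal plus one entry, hence nondegenerate; this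
  forces the hull to be spanned by the remaining monomials. Linear independence of
  all \<open>ev(x^e)\<close> comes from functionals on the chart \<open>x_0 = 1\<close> that are dual to them
  up to sign.
\<close>

section \<open>Power sums over a finite field\<close>

lemma card_field_ge_2:
  assumes "finite (UNIV :: 'a::field set)"
  shows "2 \<le> card (UNIV :: 'a set)"
proof -
  have "card {0::'a, 1} \<le> card (UNIV :: 'a set)"
    using assms by (intro card_mono) auto
  then show ?thesis by simp
qed

lemma of_nat_card_field_eq_0:
  assumes "finite (UNIV :: 'a::field set)"
  shows "of_nat (card (UNIV :: 'a set)) = (0::'a)"
proof -
  have "(\<Sum>t\<in>UNIV. t + 1) = (\<Sum>t\<in>UNIV. (t::'a))"
    by (rule sum.reindex_bij_witness[of _ "\<lambda>t. t - 1" "\<lambda>t. t + 1"]) auto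
  then show ?thesis by (simp add: sum.distrib)
qed

lemma power_card_minus_1_eq_1:
  assumes "finite (UNIV :: 'a::field set)" and "(t::'a) \<noteq> 0"
  shows "t ^ (card (UNIV :: 'a set) - 1) = 1"
proof -
  let ?U = "UNIV - {0::'a}"
  have "(\<Prod>s\<in>?U. t * s) = (\<Prod>s\<in>?U. s)"
    by (rule prod.reindex_bij_witness[of _ "\<lambda>s. s / t" "\<lambda>s. t * s"]) (auto simp: assms)
  moreover have "(\<Prod>s\<in>?U. t * s) = t ^ card ?U * (\<Prod>s\<in>?U. s)"
    by (simp add: prod.distrib)
  moreover have "card ?U = card (UNIV :: 'a set) - 1"
    using assms by (simp add: card_Diff_subset)
  moreover have "(\<Prod>s\<in>?U. s) \<noteq> 0"
    using assms by simp
  ultimately show ?thesis by simp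
qed

lemma power_mod_card_minus_1:
  assumes "finite (UNIV :: 'a::field set)" and "(t::'a) \<noteq> 0"
  shows "t ^ m = t ^ (m mod (card (UNIV :: 'a set) - 1))"
proof -
  let ?d = "card (UNIV :: 'a set) - 1"
  have "t ^ m = t ^ (?d * (m div ?d) + m mod ?d)"
    by (simp only: mult_div_mod_eq)
  also have "\<dots> = (t ^ ?d) ^ (m div ?d) * t ^ (m mod ?d)"
    by (simp only: power_add power_mult)
  finally show ?thesis
    by (simp only: power_card_minus_1_eq_1[OF assms] power_one mult_1)
qed

lemma ex_power_neq_1:
  assumes "finite (UNIV :: 'a::field set)" and "0 < m" and "m < card (UNIV :: 'a set) - 1"
  shows "\<exists>c::'a. c \<noteq> 0 \<and> c ^ m \<noteq> 1"
proof (rule ccontr)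
  assume all_roots: "\<not> ?thesis"
  define p :: "'a poly" where "p = monom 1 m - 1"
  have "p \<noteq> 0"
    using assms(2) by (auto simp: p_def poly_monom power_0_left dest: arg_cong[of _ _ "\<lambda>p. poly p 0"])
  then have "card {x. poly p x = 0} \<le> degree p"
    by (rule card_poly_roots_bound)
  also have "degree p \<le> m"
    unfolding p_def by (rule degree_diff_le) (auto simp: degree_monom_le)
  finally have "card {x. poly p x = 0} \<le> m" .
  moreover have "card (UNIV - {0::'a}) \<le> card {x. poly p x = 0}"
    using all_roots assms(1)
    by (intro card_mono) (auto simp: p_def poly_monom intro: rev_finite_subset)
  moreover have "card (UNIV - {0::'a}) = card (UNIV :: 'a set) - 1"
    using assms(1) by (simp add: card_Diff_subset)
  ultimately show False using assms(3) by simp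
qed

definition power_sum :: "nat \<Rightarrow> 'a::field" where
  "power_sum m = (\<Sum>t\<in>UNIV. t ^ m)"

lemma power_sum_eq:
  assumes fin: "finite (UNIV :: 'a::field set)"
  shows "(power_sum m :: 'a) = (if 0 < m \<and> (card (UNIV :: 'a set) - 1) dvd m then -1 else 0)"
proof -
  let ?d = "card (UNIV :: 'a set) - 1"
  have d_pos: "0 < ?d" using card_field_ge_2[OF fin] by simp
  consider "m = 0" | "0 < m" "?d dvd m" | "0 < m" "\<not> ?d dvd m" by blast
  then show ?thesis
  proof cases
    case 1
    then show ?thesis using of_nat_card_field_eq_0[OF fin] by (simp add: power_sum_def)
  next
    case 2
    have "t ^ m = (if t = 0 then 0 else 1)" for t :: 'a
      using 2 power_mod_card_minus_1[OF fin, of t m] by (auto simp: power_0_left)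
    then have "(power_sum m :: 'a) = (\<Sum>t\<in>UNIV. if t = (0::'a) then 0 else 1)"
      by (simp add: power_sum_def)
    also have "\<dots> = of_nat ?d"
      using fin by (simp add: sum.If_cases Compl_eq_Diff_UNIV card_Diff_subset)
    also have "\<dots> = -1"
      using d_pos of_nat_card_field_eq_0[OF fin] by (simp add: of_nat_diff)
    finally show ?thesis using 2 by simp
  next
    case 3
    have "0 < m mod ?d"
      using 3(2) by (metis dvd_eq_mod_eq_0 gr0I)
    moreover have "m mod ?d < ?d"
      using d_pos by simp
    ultimately obtain c :: 'a where c: "c \<noteq> 0" "c ^ (m mod ?d) \<noteq> 1"
      using ex_power_neq_1[OF fin] by blast
    have "(power_sum m :: 'a) = (\<Sum>t\<in>UNIV. (c * t) ^ m)"
      unfolding power_sum_def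
      by (rule sum.reindex_bij_witness[of _ "\<lambda>s. c * s" "\<lambda>s. s / c"]) (auto simp: c)
    also have "\<dots> = c ^ m * power_sum m"
      by (simp add: power_sum_def power_mult_distrib sum_distrib_left)
    finally have "(c ^ m - 1) * power_sum m = 0"
      by (simp add: algebra_simps)
    moreover have "c ^ m \<noteq> 1"
      using c power_mod_card_minus_1[OF fin c(1)] by simp
    ultimately show ?thesis using 3 by simp
  qed
qed

corollary power_sum_below_double:
  assumes "finite (UNIV :: 'a::field set)" and "m < 2 * (card (UNIV :: 'a set) - 1)"
  shows "(power_sum m :: 'a) = (if m = card (UNIV :: 'a set) - 1 then -1 else 0)"
proof -
  let ?d = "card (UNIV :: 'a set) - 1"
  have "0 < ?d" using card_field_ge_2[OF assms(1)] by simp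
  moreover have "m = ?d" if pos: "0 < m" and dvd: "?d dvd m"
  proof -
    obtain r where r: "m = ?d * r" using dvd by blast
    with pos assms(2) have "0 < r" "r < 2" by auto
    then show ?thesis using r by (simp add: numeral_2_eq_2 less_Suc_eq)
  qed
  ultimately show ?thesis using power_sum_eq[OF assms(1), of m] by auto
qed

section \<open>Sums of monomials over projective space\<close>

definition leading_one_points :: "nat \<Rightarrow> nat \<Rightarrow> (nat \<Rightarrow> 'a::field) set" where
  "leading_one_points n i = {p. (\<forall>j<i. p j = 0) \<and> p i = 1 \<and> (\<forall>j>n. p j = 0)}"

definition extend_leading_one :: "nat \<Rightarrow> nat \<Rightarrow> (nat \<Rightarrow> 'a::field) \<Rightarrow> (nat \<Rightarrow> 'a)" where
  "extend_leading_one n i f =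
     (\<lambda>j. if j < i then 0 else if j = i then 1 else if j \<le> n then f j else 0)"

lemma leading_one_points_eq_image:
  assumes "i \<le> n"
  shows "leading_one_points n i = extend_leading_one n i ` PiE {i<..n} (\<lambda>_. UNIV)"
proof
  show "leading_one_points n i \<subseteq> extend_leading_one n i ` PiE {i<..n} (\<lambda>_. UNIV)"
  proof
    fix p assume "p \<in> leading_one_points n i"
    then have "p = extend_leading_one n i (restrict p {i<..n})"
      by (auto simp: extend_leading_one_def leading_one_points_def fun_eq_iff)
    then show "p \<in> extend_leading_one n i ` PiE {i<..n} (\<lambda>_. UNIV)" by auto
  qed
qed (use assms in \<open>auto simp: extend_leading_one_def leading_one_points_def\<close>)

lemma inj_on_extend_leading_one:
  "inj_on (extend_leading_one n i) (PiE {i<..n} (\<lambda>_. UNIV))"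
proof
  fix f g :: "nat \<Rightarrow> 'a"
  assume f: "f \<in> PiE {i<..n} (\<lambda>_. UNIV)" and g: "g \<in> PiE {i<..n} (\<lambda>_. UNIV)"
    and eq: "extend_leading_one n i f = extend_leading_one n i g"
  show "f = g"
  proof (rule PiE_ext[OF f g])
    fix j assume "j \<in> {i<..n}"
    then show "f j = g j" using fun_cong[OF eq, of j] by (auto simp: extend_leading_one_def)
  qed
qed

lemma finite_leading_one_points:
  assumes "finite (UNIV :: 'a::field set)"
  shows "finite (leading_one_points n i :: (nat \<Rightarrow> 'a) set)"
proof (cases "i \<le> n")
  case True
  then show ?thesis
    unfolding leading_one_points_eq_image[OF True] using assms by (intro finite_imageI finite_PiE) auto
next
  case False
  then have "leading_one_points n i = ({} :: (nat \<Rightarrow> 'a) set)"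
    by (auto simp: leading_one_points_def)
  then show ?thesis by simp
qed

lemma proj_points_eq_UN_leading_one_points:
  "proj_points n = (\<Union>i\<le>n. leading_one_points n i)"
  unfolding proj_points_def leading_one_points_def by auto

lemma disjoint_leading_one_points:
  assumes "i \<noteq> j"
  shows "leading_one_points n i \<inter> leading_one_points n j = {}"
proof -
  have False if "p \<in> leading_one_points n i" "p \<in> leading_one_points n j" for p :: "nat \<Rightarrow> 'a"
    using that assms by (cases i j rule: linorder_cases) (auto simp: leading_one_points_def)
  then show ?thesis by blast
qed

lemma sum_proj_points:
  assumes "finite (UNIV :: 'a::field set)"
  shows "(\<Sum>p\<in>(proj_points n :: (nat \<Rightarrow> 'a) set). F p) = (\<Sum>i\<le>n. \<Sum>p\<in>leading_one_points n i. F p)"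
  unfolding proj_points_eq_UN_leading_one_points
  by (intro sum.UNION_disjoint)
    (simp_all add: finite_leading_one_points[OF assms] disjoint_leading_one_points)

lemma prod_atMost_split:
  fixes i n :: nat
  assumes "i \<le> n"
  shows "(\<Prod>j\<le>n. g j) = (\<Prod>j<i. g j) * g i * (\<Prod>j\<in>{i<..n}. (g j :: 'a::comm_monoid_mult))"
proof -
  have "{..n} = {..<i} \<union> insert i {i<..n}"
    using assms by (intro set_eqI) (simp, arith)
  then have "(\<Prod>j\<le>n. g j) = (\<Prod>j\<in>{..<i} \<union> insert i {i<..n}. g j)"
    by simp
  also have "\<dots> = (\<Prod>j<i. g j) * (\<Prod>j\<in>insert i {i<..n}. g j)"
    by (rule prod.union_disjoint) auto
  finally show ?thesis
    by (simp add: mult.assoc)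
qed

lemma prod_zero_power:
  "finite A \<Longrightarrow> (\<Prod>j\<in>A. (0::'a::field) ^ h j) = (if \<forall>j\<in>A. h j = 0 then 1 else 0)"
  by (induction A rule: finite_induct) (auto simp: power_0_left)

lemma sum_leading_one_points_monomial:
  assumes fin: "finite (UNIV :: 'a::field set)" and "i \<le> n"
  shows "(\<Sum>p\<in>(leading_one_points n i :: (nat \<Rightarrow> 'a) set). \<Prod>j\<le>n. p j ^ h j)
       = (if \<forall>j<i. h j = 0 then \<Prod>j\<in>{i<..n}. power_sum (h j) else 0)"
proof -
  let ?ext = "extend_leading_one n i :: (nat \<Rightarrow> 'a) \<Rightarrow> _"
  let ?P = "PiE {i<..n} (\<lambda>_. UNIV :: 'a set)"
  have "(\<Sum>p\<in>leading_one_points n i. \<Prod>j\<le>n. p j ^ h j) = (\<Sum>f\<in>?P. \<Prod>j\<le>n. ?ext f j ^ h j)"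
    unfolding leading_one_points_eq_image[OF assms(2)]
    by (rule sum.reindex[OF inj_on_extend_leading_one, unfolded comp_def])
  also have "\<dots> = (\<Sum>f\<in>?P. (if \<forall>j<i. h j = 0 then 1 else 0) * (\<Prod>j\<in>{i<..n}. f j ^ h j))"
  proof (rule sum.cong[OF refl])
    fix f :: "nat \<Rightarrow> 'a"
    have "(\<Prod>j<i. ?ext f j ^ h j) = (\<Prod>j<i. 0 ^ h j)"
      "(\<Prod>j\<in>{i<..n}. ?ext f j ^ h j) = (\<Prod>j\<in>{i<..n}. f j ^ h j)"
      "?ext f i = 1"
      by (auto intro: prod.cong simp: extend_leading_one_def)
    then show "(\<Prod>j\<le>n. ?ext f j ^ h j) = (if \<forall>j<i. h j = 0 then 1 else 0) * (\<Prod>j\<in>{i<..n}. f j ^ h j)"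
      by (simp add: prod_atMost_split[OF assms(2)] prod_zero_power Ball_def)
  qed
  also have "\<dots> = (if \<forall>j<i. h j = 0 then 1 else 0) * (\<Prod>j\<in>{i<..n}. \<Sum>t\<in>UNIV. (t::'a) ^ h j)"
    using fin by (simp add: sum_distrib_left prod_sum_PiE)
  finally show ?thesis by (auto simp: power_sum_def)
qed

lemma sum_proj_points_monomial:
  assumes "finite (UNIV :: 'a::field set)"
  shows "(\<Sum>p\<in>(proj_points n :: (nat \<Rightarrow> 'a) set). \<Prod>j\<le>n. p j ^ h j)
       = (\<Sum>i\<le>n. if \<forall>j<i. h j = 0 then \<Prod>j\<in>{i<..n}. power_sum (h j) else 0)"
  unfolding sum_proj_points[OF assms] by (simp add: sum_leading_one_points_monomial[OF assms])

section \<open>Monomials\<close>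

lemma monomials_0: "monomials 0 k = {(\<lambda>i. if i = 0 then k else 0)}"
  unfolding monomials_def by (auto simp: fun_eq_iff)

lemma monomials_Suc:
  "monomials (Suc n) k = (\<Union>a\<le>k. (\<lambda>e. e(Suc n := a)) ` monomials n (k - a))"
proof
  show "monomials (Suc n) k \<subseteq> (\<Union>a\<le>k. (\<lambda>e. e(Suc n := a)) ` monomials n (k - a))"
  proof
    fix e assume e: "e \<in> monomials (Suc n) k"
    then have "e (Suc n) \<le> k" "e(Suc n := 0) \<in> monomials n (k - e (Suc n))"
      by (auto simp: monomials_def)
    moreover have "e = (e(Suc n := 0))(Suc n := e (Suc n))" by simp
    ultimately show "e \<in> (\<Union>a\<le>k. (\<lambda>e. e(Suc n := a)) ` monomials n (k - a))"
      by blast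
  qed
next
  have "(\<Sum>i\<le>n. (e(Suc n := a)) i) = (\<Sum>i\<le>n. e i)" for e :: "nat \<Rightarrow> nat" and a
    by (rule sum.cong) auto
  then show "(\<Union>a\<le>k. (\<lambda>e. e(Suc n := a)) ` monomials n (k - a)) \<subseteq> monomials (Suc n) k"
    by (auto simp: monomials_def)
qed

lemma finite_monomials: "finite (monomials n k)"
  by (induction n arbitrary: k) (simp_all add: monomials_0 monomials_Suc)

lemma card_monomials: "card (monomials n k) = (n + k) choose k"
proof (induction n arbitrary: k)
  case 0
  then show ?case by (simp add: monomials_0)
next
  case (Suc n)
  have inj: "inj_on (\<lambda>e. e(Suc n := a)) (monomials n b)" for a b
  proof (rule inj_onI)
    fix x y assume "x \<in> monomials n b" "y \<in> monomials n b" "x(Suc n := a) = y(Suc n := a)"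
    then show "x = y"
      by (simp add: monomials_def fun_eq_iff) (metis Suc_n_not_le_n fun_upd_other not_le)
  qed
  have "card (monomials (Suc n) k) = (\<Sum>a\<le>k. card ((\<lambda>e. e(Suc n := a)) ` monomials n (k - a)))"
    unfolding monomials_Suc
    by (rule card_UN_disjoint) (auto simp: finite_monomials dest: fun_cong[of _ _ "Suc n"])
  also have "\<dots> = (\<Sum>a\<le>k. (n + (k - a)) choose (k - a))"
    using Suc by (simp add: card_image[OF inj])
  also have "\<dots> = (\<Sum>j\<le>k. (n + j) choose j)"
    by (rule sum.reindex_bij_witness[of _ "\<lambda>j. k - j" "\<lambda>j. k - j"]) auto
  also have "\<dots> = (Suc n + k) choose k"
    by (simp add: sum_choose_lower)
  finally show ?case .
qed

lemma monomials_le_degree: "e \<in> monomials n k \<Longrightarrow> e j \<le> k"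
  by (cases "j \<le> n") (auto simp: monomials_def intro: member_le_sum[of j "{..n}" e, simplified])

lemma monomials_eqI:
  assumes e: "e \<in> monomials n k" and f: "f \<in> monomials n k"
    and eq: "\<And>j. j \<in> {0<..n} \<Longrightarrow> e j = f j"
  shows "e = f"
proof
  fix j
  have split: "(\<Sum>j\<le>n. g j) = g 0 + (\<Sum>j\<in>{0<..n}. g j)" for g :: "nat \<Rightarrow> nat"
    by (simp add: atMost_atLeast0 sum.atLeast_Suc_atMost greaterThanAtMost_def atLeastSucAtMost_greaterThanAtMost)
  have "(\<Sum>j\<in>{0<..n}. e j) = (\<Sum>j\<in>{0<..n}. f j)"
    using eq by simp
  then have "e 0 = f 0"
    using e f split[of e] split[of f] by (simp add: monomials_def)
  then show "e j = f j"
    using e f eq by (cases "j = 0"; cases "n < j") (auto simp: monomials_def)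
qed

lemma sum_atMost_last_two:
  fixes n :: nat
  assumes "1 \<le> n"
  shows "(\<Sum>j\<le>n. g j) = (\<Sum>j<n - 1. g j) + g (n - 1) + (g n :: 'a::comm_monoid_add)"
proof -
  obtain m where "n = Suc m" using assms by (cases n) auto
  then show ?thesis by (simp add: lessThan_Suc_atMost[symmetric])
qed

lemma excl_mon_in_monomials:
  assumes "1 \<le> n" and "a \<le> k"
  shows "excl_mon n k a \<in> monomials n k"
  using assms sum_atMost_last_two[OF assms(1), of "excl_mon n k a"]
  by (auto simp: monomials_def excl_mon_def)

lemma excl_mon_eq_iff: "1 \<le> n \<Longrightarrow> excl_mon n k a = excl_mon n k b \<longleftrightarrow> a = b"
  by (auto simp: excl_mon_def dest: fun_cong[of _ _ n])

lemma eq_excl_mon_iff: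
  assumes n: "1 \<le> n" and e: "e \<in> monomials n k" and "a \<le> k"
  shows "e = excl_mon n k a \<longleftrightarrow> (\<forall>j<n - 1. e j = 0) \<and> e n = a"
proof
  assume H: "(\<forall>j<n - 1. e j = 0) \<and> e n = a"
  then have "e (n - 1) + a = k"
    using e sum_atMost_last_two[OF n, of e] by (simp add: monomials_def)
  then have "e (n - 1) = k - a" by simp
  show "e = excl_mon n k a"
  proof
    fix j
    consider "j = n" | "j = n - 1" "j \<noteq> n" | "j < n - 1" | "n < j"
      using n by linarith
    then show "e j = excl_mon n k a j"
      by cases (use H e \<open>e (n - 1) = k - a\<close> in \<open>auto simp: excl_mon_def monomials_def\<close>)
  qed
qed (auto simp: excl_mon_def)

lemma eq_excl_mon_degree_iff:
  assumes n: "1 \<le> n" and e: "e \<in> monomials n k"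
  shows "e = excl_mon n k k \<longleftrightarrow> (\<forall>j<n. e j = 0)"
proof -
  have sum: "(\<Sum>j<n - 1. e j) + e (n - 1) + e n = k"
    using e sum_atMost_last_two[OF n, of e] by (simp add: monomials_def)
  have "{..<n} = insert (n - 1) {..<n - 1}"
    using n by auto
  then have below: "(\<forall>j<n. e j = 0) \<longleftrightarrow> (\<forall>j<n - 1. e j = 0) \<and> e (n - 1) = 0"
    by (auto simp: lessThan_iff[symmetric] simp del: lessThan_iff)
  have "(\<forall>j<n. e j = 0) \<longleftrightarrow> (\<forall>j<n - 1. e j = 0) \<and> e n = k"
    unfolding below using sum by auto
  then show ?thesis using eq_excl_mon_iff[OF n e] by simp
qed

section \<open>Inner products of evaluation vectors\<close>

definition code_inner :: "nat \<Rightarrow> ((nat \<Rightarrow> 'a::field) \<Rightarrow> 'a) \<Rightarrow> ((nat \<Rightarrow> 'a) \<Rightarrow> 'a) \<Rightarrow> 'a" where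
  "code_inner n u v = (\<Sum>p\<in>proj_points n. u p * v p)"

lemma mem_dual_code_iff:
  "v \<in> dual_code n C \<longleftrightarrow> (\<forall>p. p \<notin> proj_points n \<longrightarrow> v p = 0) \<and> (\<forall>u\<in>C. code_inner n u v = 0)"
  by (simp add: dual_code_def code_inner_def)

lemma code_inner_ev_mon:
  assumes fin: "finite (UNIV :: 'a::field set)" and n: "1 \<le> n"
    and k: "k < card (UNIV :: 'a set) - 1"
    and e: "e \<in> monomials n k" and f: "f \<in> monomials n k"
  shows "code_inner n (ev_mon n e) (ev_mon n f :: (nat \<Rightarrow> 'a) \<Rightarrow> 'a)
       = (if \<forall>j<n. e j + f j = 0 then 1 else 0)
       - (if (\<forall>j<n - 1. e j + f j = 0) \<and> e n + f n = card (UNIV :: 'a set) - 1 then 1 else 0)"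
proof -
  let ?d = "card (UNIV :: 'a set) - 1"
  define g where "g j = e j + f j" for j
  have power_sum_g: "power_sum (g j) = (if g j = ?d then -1 else (0::'a))" for j
    using monomials_le_degree[OF e, of j] monomials_le_degree[OF f, of j] k
    by (intro power_sum_below_double[OF fin]) (simp add: g_def)
  have "g (n - 1) + g n \<le> (\<Sum>j\<le>n. g j)"
    using sum_atMost_last_two[OF n, of g] by simp
  also have "(\<Sum>j\<le>n. g j) = 2 * k"
    using e f by (simp add: g_def sum.distrib monomials_def)
  finally have not_both: "g (n - 1) \<noteq> ?d \<or> g n \<noteq> ?d"
    using k by auto
  have "(\<Sum>i<n - 1. if \<forall>j<i. g j = 0 then \<Prod>j\<in>{i<..n}. power_sum (g j) else 0) = (0::'a)"
  proof (intro sum.neutral ballI)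
    fix i assume "i \<in> {..<n - 1}"
    then have "n - 1 \<in> {i<..n}" "n \<in> {i<..n}" by auto
    then have "(\<Prod>j\<in>{i<..n}. power_sum (g j)) = (0::'a)"
      using not_both by (intro prod_zero) (auto simp: power_sum_g)
    then show "(if \<forall>j<i. g j = 0 then \<Prod>j\<in>{i<..n}. power_sum (g j) else 0) = (0::'a)"
      by simp
  qed
  moreover have "{n - 1<..n} = {n}" "{n<..n} = {}"
    using n by auto
  ultimately have sum_strata: "(\<Sum>i\<le>n. if \<forall>j<i. g j = 0 then \<Prod>j\<in>{i<..n}. power_sum (g j) else 0)
      = (if \<forall>j<n - 1. g j = 0 then power_sum (g n) else 0) + (if \<forall>j<n. g j = 0 then 1 else (0::'a))"
    by (auto simp: sum_atMost_last_two[OF n])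
  have "code_inner n (ev_mon n e) (ev_mon n f) = (\<Sum>p\<in>(proj_points n :: (nat \<Rightarrow> 'a) set). \<Prod>j\<le>n. p j ^ g j)"
    unfolding code_inner_def
    by (intro sum.cong) (simp_all add: ev_mon_def g_def power_add prod.distrib)
  also have "\<dots> = (\<Sum>i\<le>n. if \<forall>j<i. g j = 0 then \<Prod>j\<in>{i<..n}. power_sum (g j) else 0)"
    by (rule sum_proj_points_monomial[OF fin])
  also have "\<dots> = (if \<forall>j<n. g j = 0 then 1 else 0) - (if (\<forall>j<n - 1. g j = 0) \<and> g n = ?d then 1 else 0)"
    unfolding sum_strata by (auto simp: power_sum_g)
  finally show ?thesis
    by (simp add: g_def)
qed

section \<open>Linear independence of the evaluated monomials\<close>

interpretation VS: vector_space "fscale :: 'a::field \<Rightarrow> ('b \<Rightarrow> 'a) \<Rightarrow> ('b \<Rightarrow> 'a)"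
  by (rule vector_space_fscale)

lemma sum_fscale_apply: "(\<Sum>x\<in>B. fscale (c x) (v x)) p = (\<Sum>x\<in>B. c x * v x p)"
  by (induction B rule: infinite_finite_induct) (auto simp: fscale_def)

text \<open>Pairing with \<open>x_1^{q-1-f_1} \<cdots> x_n^{q-1-f_n}\<close> on the chart \<open>x_0 = 1\<close> detects \<open>x^f\<close>.\<close>

definition dual_functional :: "nat \<Rightarrow> (nat \<Rightarrow> nat) \<Rightarrow> ((nat \<Rightarrow> 'a::field) \<Rightarrow> 'a) \<Rightarrow> 'a" where
  "dual_functional n f v =
     (\<Sum>p\<in>leading_one_points n 0. v p * (\<Prod>j\<in>{0<..n}. p j ^ (card (UNIV :: 'a set) - 1 - f j)))"

lemma dual_functional_sum:
  "dual_functional n f (\<Sum>x\<in>B. fscale (c x) (v x)) = (\<Sum>x\<in>B. c x * dual_functional n f (v x))"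
  unfolding dual_functional_def sum_fscale_apply
  by (simp add: sum_distrib_left sum_distrib_right mult.assoc sum.swap[of _ B])

lemma dual_functional_ev_mon:
  assumes fin: "finite (UNIV :: 'a::field set)" and k: "k < card (UNIV :: 'a set) - 1"
    and e: "e \<in> monomials n k" and f: "f \<in> monomials n k"
  shows "dual_functional n f (ev_mon n e :: (nat \<Rightarrow> 'a) \<Rightarrow> 'a) = (if e = f then (-1) ^ n else 0)"
proof -
  let ?d = "card (UNIV :: 'a set) - 1"
  define h where "h j = e j + (?d - f j)" for j
  have "dual_functional n f (ev_mon n e :: (nat \<Rightarrow> 'a) \<Rightarrow> 'a)
      = (\<Sum>p\<in>(leading_one_points n 0 :: (nat \<Rightarrow> 'a) set). \<Prod>j\<le>n. p j ^ h j)"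
    unfolding dual_functional_def
  proof (intro sum.cong refl)
    fix p :: "nat \<Rightarrow> 'a" assume "p \<in> leading_one_points n 0"
    then have p: "p \<in> proj_points n" "p 0 = 1"
      by (auto simp: proj_points_eq_UN_leading_one_points leading_one_points_def)
    then have "(\<Prod>j\<le>n. p j ^ (?d - f j)) = (\<Prod>j\<in>{0<..n}. p j ^ (?d - f j))"
      by (simp add: prod_atMost_split[of 0 n])
    then show "ev_mon n e p * (\<Prod>j\<in>{0<..n}. p j ^ (?d - f j)) = (\<Prod>j\<le>n. p j ^ h j)"
      using p by (simp add: ev_mon_def h_def power_add prod.distrib)
  qed
  also have "\<dots> = (\<Prod>j\<in>{0<..n}. power_sum (h j))"
    using sum_leading_one_points_monomial[OF fin, of 0 n h] by simp
  also have "\<dots> = (\<Prod>j\<in>{0<..n}. if e j = f j then -1 else 0)"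
  proof (intro prod.cong refl)
    fix j
    have "e j \<le> k" "f j \<le> k"
      using monomials_le_degree e f by auto
    then have "h j < 2 * ?d" "h j = ?d \<longleftrightarrow> e j = f j"
      using k by (auto simp: h_def)
    then show "power_sum (h j) = (if e j = f j then -1 else (0::'a))"
      by (simp add: power_sum_below_double[OF fin])
  qed
  also have "\<dots> = (if e = f then (-1) ^ n else 0)"
  proof (cases "e = f")
    case False
    then obtain j where "j \<in> {0<..n}" "e j \<noteq> f j"
      using monomials_eqI[OF e f] by blast
    then have "(\<Prod>j\<in>{0<..n}. if e j = f j then -1 else 0) = (0::'a)"
      by (intro prod_zero) auto
    then show ?thesis using False by simp
  qed simp
  finally show ?thesis .
qed

lemma inj_on_ev_mon_monomials:
  assumes fin: "finite (UNIV :: 'a::field set)" and k: "k < card (UNIV :: 'a set) - 1"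
  shows "inj_on (ev_mon n :: _ \<Rightarrow> (nat \<Rightarrow> 'a) \<Rightarrow> 'a) (monomials n k)"
proof (rule inj_onI)
  fix e f assume e: "e \<in> monomials n k" and f: "f \<in> monomials n k"
    and "(ev_mon n e :: (nat \<Rightarrow> 'a) \<Rightarrow> 'a) = ev_mon n f"
  then have "dual_functional n f (ev_mon n e :: (nat \<Rightarrow> 'a) \<Rightarrow> 'a) = dual_functional n f (ev_mon n f)"
    by simp
  then show "e = f"
    using dual_functional_ev_mon[OF fin k e f] dual_functional_ev_mon[OF fin k f f]
    by (auto split: if_splits)
qed

lemma independent_ev_mon_monomials:
  assumes fin: "finite (UNIV :: 'a::field set)" and k: "k < card (UNIV :: 'a set) - 1"
  shows "\<not> VS.dependent (ev_mon n ` monomials n k :: ((nat \<Rightarrow> 'a) \<Rightarrow> 'a) set)"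
proof
  let ?ev = "ev_mon n :: _ \<Rightarrow> (nat \<Rightarrow> 'a) \<Rightarrow> 'a"
  assume "VS.dependent (?ev ` monomials n k)"
  then obtain u where u: "\<exists>v\<in>?ev ` monomials n k. u v \<noteq> 0"
    and zero: "(\<Sum>v\<in>?ev ` monomials n k. fscale (u v) v) = 0"
    using VS.dependent_finite[of "?ev ` monomials n k"] finite_monomials by auto
  obtain f where f: "f \<in> monomials n k" "u (?ev f) \<noteq> 0"
    using u by blast
  have "0 = dual_functional n f (0 :: (nat \<Rightarrow> 'a) \<Rightarrow> 'a)"
    by (simp add: dual_functional_def)
  also have "(0 :: (nat \<Rightarrow> 'a) \<Rightarrow> 'a) = (\<Sum>e\<in>monomials n k. fscale (u (?ev e)) (?ev e))"
    using zero by (simp add: sum.reindex[OF inj_on_ev_mon_monomials[OF fin k]])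
  also have "dual_functional n f \<dots> = (\<Sum>e\<in>monomials n k. u (?ev e) * dual_functional n f (?ev e))"
    by (rule dual_functional_sum)
  also have "\<dots> = (\<Sum>e\<in>monomials n k. if e = f then u (?ev e) * (-1) ^ n else 0)"
    by (intro sum.cong refl) (simp add: dual_functional_ev_mon[OF fin k _ f(1)])
  also have "\<dots> = u (?ev f) * (-1) ^ n"
    using f(1) finite_monomials by simp
  finally show False
    using f(2) by simp
qed

corollary independent_ev_mon_subset:
  assumes "finite (UNIV :: 'a::field set)" and "k < card (UNIV :: 'a set) - 1"
    and "A \<subseteq> monomials n k"
  shows "\<not> VS.dependent (ev_mon n ` A :: ((nat \<Rightarrow> 'a) \<Rightarrow> 'a) set)"
proof
  assume "VS.dependent (ev_mon n ` A :: ((nat \<Rightarrow> 'a) \<Rightarrow> 'a) set)"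
  then have "VS.dependent (ev_mon n ` monomials n k :: ((nat \<Rightarrow> 'a) \<Rightarrow> 'a) set)"
    using image_mono[OF assms(3)] by (rule VS.dependent_mono)
  then show False
    using independent_ev_mon_monomials[OF assms(1,2)] by blast
qed

lemma dimF_span_ev_mon:
  assumes fin: "finite (UNIV :: 'a::field set)" and k: "k < card (UNIV :: 'a set) - 1"
    and A: "A \<subseteq> monomials n k"
  shows "dimF (VS.span (ev_mon n ` A) :: ((nat \<Rightarrow> 'a) \<Rightarrow> 'a) set) = card A"
proof -
  have "dimF (VS.span (ev_mon n ` A) :: ((nat \<Rightarrow> 'a) \<Rightarrow> 'a) set) = card (ev_mon n ` A :: ((nat \<Rightarrow> 'a) \<Rightarrow> 'a) set)"
    unfolding dimF_def by (rule VS.dim_span_eq_card_independent[OF independent_ev_mon_subset[OF fin k A]])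
  also have "\<dots> = card A"
    using inj_on_subset[OF inj_on_ev_mon_monomials[OF fin k] A] by (rule card_image)
  finally show ?thesis .
qed

section \<open>The hull\<close>

lemma subspace_dual_code: "VS.subspace (dual_code n C :: ((nat \<Rightarrow> 'a::field) \<Rightarrow> 'a) set)"
  unfolding VS.subspace_def dual_code_def
  by (auto simp: fscale_def plus_fun_def zero_fun_def distrib_left sum.distrib
      mult.left_commute[of _ "_::'a"] sum_distrib_left[symmetric])

lemma subspace_code_inner_eq_0: "VS.subspace {u :: (nat \<Rightarrow> 'a::field) \<Rightarrow> 'a. code_inner n u v = 0}"
  unfolding VS.subspace_def code_inner_def
  by (auto simp: fscale_def plus_fun_def zero_fun_def distrib_right sum.distrib
      mult.assoc sum_distrib_left[symmetric])

lemma dual_code_span: "dual_code n (VS.span G) = dual_code n (G :: ((nat \<Rightarrow> 'a::field) \<Rightarrow> 'a) set)"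
proof
  show "dual_code n (VS.span G) \<subseteq> dual_code n G"
  proof
    fix v assume "v \<in> dual_code n (VS.span G)"
    then show "v \<in> dual_code n G"
      using VS.span_base unfolding mem_dual_code_iff by blast
  qed
  show "dual_code n G \<subseteq> dual_code n (VS.span G)"
  proof
    fix v assume v: "v \<in> dual_code n G"
    then have "VS.span G \<subseteq> {u. code_inner n u v = 0}"
      by (intro VS.span_minimal subspace_code_inner_eq_0) (auto simp: mem_dual_code_iff)
    then show "v \<in> dual_code n (VS.span G)"
      using v by (auto simp: mem_dual_code_iff)
  qed
qed

lemma code_inner_sum_right:
  "code_inner n u (\<Sum>x\<in>B. fscale (c x) (v x)) = (\<Sum>x\<in>B. c x * code_inner n u (v x))"
  unfolding code_inner_def sum_fscale_apply
  by (simp add: sum_distrib_left sum_distrib_right mult.assoc mult.left_commute sum.swap[of _ B])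

definition excluded_monomials :: "nat \<Rightarrow> nat \<Rightarrow> nat \<Rightarrow> (nat \<Rightarrow> nat) set" where
  "excluded_monomials n k q = excl_mon n k ` {q - 1 - k..k}"

lemma excluded_monomials_subset: "1 \<le> n \<Longrightarrow> excluded_monomials n k q \<subseteq> monomials n k"
  by (auto simp: excluded_monomials_def intro: excl_mon_in_monomials)

lemma card_excluded_monomials: "1 \<le> n \<Longrightarrow> card (excluded_monomials n k q) = Suc k - (q - 1 - k)"
  unfolding excluded_monomials_def by (subst card_image) (auto simp: inj_on_def excl_mon_eq_iff)

lemma code_inner_ev_mon_eq_0:
  assumes fin: "finite (UNIV :: 'a::field set)" and n: "1 \<le> n"
    and k: "k < card (UNIV :: 'a set) - 1" and k2: "card (UNIV :: 'a set) - 1 < 2 * k"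
    and e: "e \<in> monomials n k"
    and m: "m \<in> monomials n k - excluded_monomials n k (card (UNIV :: 'a set))"
  shows "code_inner n (ev_mon n e) (ev_mon n m :: (nat \<Rightarrow> 'a) \<Rightarrow> 'a) = 0"
proof -
  let ?d = "card (UNIV :: 'a set) - 1"
  have m_mon: "m \<in> monomials n k" and m_excl: "\<And>a. ?d - k \<le> a \<Longrightarrow> a \<le> k \<Longrightarrow> m \<noteq> excl_mon n k a"
    using m by (auto simp: excluded_monomials_def)
  have "\<not> (\<forall>j<n. e j + m j = 0)"
  proof
    assume "\<forall>j<n. e j + m j = 0"
    then have "m = excl_mon n k k"
      using eq_excl_mon_degree_iff[OF n m_mon] by simp
    then show False
      using m_excl[of k] k2 by simp
  qed
  moreover have "\<not> ((\<forall>j<n - 1. e j + m j = 0) \<and> e n + m n = ?d)"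
  proof
    assume H: "(\<forall>j<n - 1. e j + m j = 0) \<and> e n + m n = ?d"
    then have "m = excl_mon n k (m n)"
      using eq_excl_mon_iff[OF n m_mon monomials_le_degree[OF m_mon]] by simp
    moreover have "?d - k \<le> m n"
      using H monomials_le_degree[OF e, of n] by linarith
    ultimately show False
      using m_excl monomials_le_degree[OF m_mon, of n] by blast
  qed
  ultimately show ?thesis
    by (simp add: code_inner_ev_mon[OF fin n k e m_mon])
qed

lemma code_inner_excl_mon_ev_mon:
  assumes fin: "finite (UNIV :: 'a::field set)" and n: "1 \<le> n"
    and k: "k < card (UNIV :: 'a set) - 1"
    and b: "b \<in> {card (UNIV :: 'a set) - 1 - k..k}" and e: "e \<in> monomials n k"
  shows "code_inner n (ev_mon n (excl_mon n k b)) (ev_mon n e :: (nat \<Rightarrow> 'a) \<Rightarrow> 'a)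
       = (if b = k \<and> e = excl_mon n k k then 1 else 0)
       - (if e = excl_mon n k (card (UNIV :: 'a set) - 1 - b) then 1 else 0)"
proof -
  let ?d = "card (UNIV :: 'a set) - 1"
  let ?E = "excl_mon n k"
  have Eb: "?E b \<in> monomials n k"
    using b by (intro excl_mon_in_monomials[OF n]) simp
  have "(\<forall>j<n. ?E b j + e j = 0) \<longleftrightarrow> ?E b = ?E k \<and> e = ?E k"
    using eq_excl_mon_degree_iff[OF n Eb] eq_excl_mon_degree_iff[OF n e] by auto
  also have "\<dots> \<longleftrightarrow> b = k \<and> e = ?E k"
    using excl_mon_eq_iff[OF n] by blast
  finally have first: "(\<forall>j<n. ?E b j + e j = 0) \<longleftrightarrow> b = k \<and> e = ?E k" .
  have "((\<forall>j<n - 1. ?E b j + e j = 0) \<and> ?E b n + e n = ?d) \<longleftrightarrow> (\<forall>j<n - 1. e j = 0) \<and> e n = ?d - b"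
    using b k by (auto simp: excl_mon_def)
  also have "\<dots> \<longleftrightarrow> e = ?E (?d - b)"
    using b by (intro eq_excl_mon_iff[OF n e, symmetric]) (simp only: atLeastAtMost_iff, linarith)
  finally have second: "((\<forall>j<n - 1. ?E b j + e j = 0) \<and> ?E b n + e n = ?d) \<longleftrightarrow> e = ?E (?d - b)" .
  show ?thesis
    unfolding code_inner_ev_mon[OF fin n k Eb e] first second ..
qed

lemma code_inner_excl_mon_combination:
  assumes fin: "finite (UNIV :: 'a::field set)" and n: "1 \<le> n"
    and k: "k < card (UNIV :: 'a set) - 1" and b: "b \<in> {card (UNIV :: 'a set) - 1 - k..k}"
  shows "code_inner n (ev_mon n (excl_mon n k b))
           (\<Sum>e\<in>monomials n k. fscale (c e) (ev_mon n e :: (nat \<Rightarrow> 'a) \<Rightarrow> 'a))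
       = (if b = k then c (excl_mon n k k) else 0) - c (excl_mon n k (card (UNIV :: 'a set) - 1 - b))"
proof -
  let ?d = "card (UNIV :: 'a set) - 1"
  let ?E = "excl_mon n k"
  have "code_inner n (ev_mon n (?E b)) (\<Sum>e\<in>monomials n k. fscale (c e) (ev_mon n e :: (nat \<Rightarrow> 'a) \<Rightarrow> 'a))
      = (\<Sum>e\<in>monomials n k. (if b = k \<and> e = ?E k then c e else 0) - (if e = ?E (?d - b) then c e else 0))"
    unfolding code_inner_sum_right
  proof (intro sum.cong refl)
    fix e assume "e \<in> monomials n k"
    then show "c e * code_inner n (ev_mon n (?E b)) (ev_mon n e)
        = (if b = k \<and> e = ?E k then c e else 0) - (if e = ?E (?d - b) then c e else 0)"
      by (simp add: code_inner_excl_mon_ev_mon[OF fin n k b] right_diff_distrib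
          if_distrib[of "(*) (c e)"] split del: if_split cong: if_cong)
  qed
  also have "\<dots> = (\<Sum>e\<in>monomials n k. if b = k \<and> e = ?E k then c e else 0)
                  - (\<Sum>e\<in>monomials n k. if e = ?E (?d - b) then c e else 0)"
    by (rule sum_subtractf)
  also have "\<dots> = (if b = k then c (?E k) else 0) - c (?E (?d - b))"
  proof -
    have "?E k \<in> monomials n k" "?E (?d - b) \<in> monomials n k"
      using b by (auto intro: excl_mon_in_monomials[OF n])
    then show ?thesis
      by (cases "b = k") (simp_all add: sum.delta' finite_monomials)
  qed
  finally show ?thesis .
qed

lemma vanishes_from_antidiagonal_relation:
  fixes d :: "nat \<Rightarrow> 'a::zero"
  assumes "q - 1 < 2 * k" and "k < q - 1"
    and rel: "\<And>b. b \<in> {q - 1 - k..k} \<Longrightarrow> d (q - 1 - b) = (if b = k then d k else 0)"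
    and a: "a \<in> {q - 1 - k..k}"
  shows "d a = 0"
proof -
  have zero: "d a' = 0" if "a' \<in> {q - 1 - k..k}" "a' \<noteq> q - 1 - k" for a'
  proof -
    have "q - 1 - a' \<in> {q - 1 - k..k}" "q - 1 - a' \<noteq> k" "q - 1 - (q - 1 - a') = a'"
      using that assms(1,2) by auto
    then show ?thesis using rel[of "q - 1 - a'"] by simp
  qed
  have "d (q - 1 - k) = d k"
    using rel[of k] assms(1,2) by auto
  moreover have "d k = 0"
    using zero[of k] assms(1,2) by auto
  ultimately show ?thesis
    using zero a by (cases "a = q - 1 - k") auto
qed

lemma ev_mon_in_code_hull_PRM:
  assumes fin: "finite (UNIV :: 'a::field set)" and n: "1 \<le> n"
    and k: "k < card (UNIV :: 'a set) - 1" and k2: "card (UNIV :: 'a set) - 1 < 2 * k"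
    and m: "m \<in> monomials n k - excluded_monomials n k (card (UNIV :: 'a set))"
  shows "(ev_mon n m :: (nat \<Rightarrow> 'a) \<Rightarrow> 'a) \<in> code_hull n (PRM n k)"
proof -
  have "(ev_mon n m :: (nat \<Rightarrow> 'a) \<Rightarrow> 'a) \<in> PRM n k"
    using m unfolding PRM_def by (intro VS.span_base) auto
  moreover have "(ev_mon n m :: (nat \<Rightarrow> 'a) \<Rightarrow> 'a) \<in> dual_code n (ev_mon n ` monomials n k)"
    using code_inner_ev_mon_eq_0[OF fin n k k2 _ m] by (auto simp: mem_dual_code_iff ev_mon_def)
  ultimately show ?thesis
    unfolding code_hull_def PRM_def dual_code_span by blast
qed

lemma code_hull_PRM_subset_span:
  assumes fin: "finite (UNIV :: 'a::field set)" and n: "1 \<le> n"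
    and k: "k < card (UNIV :: 'a set) - 1" and k2: "card (UNIV :: 'a set) - 1 < 2 * k"
  shows "code_hull n (PRM n k)
       \<subseteq> VS.span (ev_mon n ` (monomials n k - excluded_monomials n k (card (UNIV :: 'a set)))
             :: ((nat \<Rightarrow> 'a) \<Rightarrow> 'a) set)"
proof
  let ?d = "card (UNIV :: 'a set) - 1"
  let ?ev = "ev_mon n :: _ \<Rightarrow> (nat \<Rightarrow> 'a) \<Rightarrow> 'a"
  let ?E = "excl_mon n k"
  let ?X = "excluded_monomials n k (card (UNIV :: 'a set))"
  fix v :: "(nat \<Rightarrow> 'a) \<Rightarrow> 'a" assume "v \<in> code_hull n (PRM n k)"
  then have v_span: "v \<in> VS.span (?ev ` monomials n k)" and v_dual: "v \<in> dual_code n (PRM n k)"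
    unfolding code_hull_def PRM_def by auto
  obtain u where "v = (\<Sum>x\<in>?ev ` monomials n k. fscale (u x) x)"
    using v_span VS.span_finite[OF finite_imageI[OF finite_monomials]] by blast
  then have v: "v = (\<Sum>e\<in>monomials n k. fscale (u (?ev e)) (?ev e))"
    by (simp add: sum.reindex[OF inj_on_ev_mon_monomials[OF fin k]])
  define c where "c e = u (?ev e)" for e
  have rel: "c (?E (?d - b)) = (if b = k then c (?E k) else 0)" if b: "b \<in> {?d - k..k}" for b
  proof -
    have "?ev (?E b) \<in> PRM n k"
      using b unfolding PRM_def by (intro VS.span_base imageI excl_mon_in_monomials[OF n]) auto
    then have "code_inner n (?ev (?E b)) v = 0"
      using v_dual by (simp add: mem_dual_code_iff)
    then show ?thesis
      using code_inner_excl_mon_combination[OF fin n k b, of c] v by (simp add: c_def)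
  qed
  have "c e = 0" if e: "e \<in> ?X" for e
  proof -
    obtain a where a: "a \<in> {?d - k..k}" "e = ?E a"
      using e by (auto simp: excluded_monomials_def)
    have "(c \<circ> ?E) a = 0"
      using rel by (intro vanishes_from_antidiagonal_relation[OF k2 k _ a(1)]) simp
    then show ?thesis
      using a(2) by simp
  qed
  then have "(\<Sum>e\<in>?X. fscale (c e) (?ev e)) = 0"
    by (intro sum.neutral) (simp add: fscale_def zero_fun_def)
  then have "v = (\<Sum>e\<in>monomials n k - ?X. fscale (c e) (?ev e))"
    using sum.subset_diff[OF excluded_monomials_subset[where q = "card (UNIV :: 'a set)", OF n]
        finite_monomials, of "\<lambda>e. fscale (c e) (?ev e)"]
    by (simp add: v c_def)
  also have "\<dots> \<in> VS.span (?ev ` (monomials n k - ?X))"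
    by (intro VS.span_sum VS.span_scale VS.span_base) auto
  finally show "v \<in> VS.span (?ev ` (monomials n k - ?X))" .
qed

lemma span_ev_mon_eq_code_hull_PRM:
  assumes fin: "finite (UNIV :: 'a::field set)" and n: "1 \<le> n"
    and k: "k < card (UNIV :: 'a set) - 1" and k2: "card (UNIV :: 'a set) - 1 < 2 * k"
  shows "VS.span (ev_mon n ` (monomials n k - excluded_monomials n k (card (UNIV :: 'a set))))
       = (code_hull n (PRM n k) :: ((nat \<Rightarrow> 'a) \<Rightarrow> 'a) set)"
proof
  have "VS.subspace (code_hull n (PRM n k) :: ((nat \<Rightarrow> 'a) \<Rightarrow> 'a) set)"
    unfolding code_hull_def PRM_def by (rule VS.subspace_inter[OF VS.subspace_span subspace_dual_code])
  then show "VS.span (ev_mon n ` (monomials n k - excluded_monomials n k (card (UNIV :: 'a set))))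
      \<subseteq> (code_hull n (PRM n k) :: ((nat \<Rightarrow> 'a) \<Rightarrow> 'a) set)"
    using ev_mon_in_code_hull_PRM[OF fin n k k2] by (intro VS.span_minimal) auto
qed (rule code_hull_PRM_subset_span[OF assms])

theorem mainTheorem10:
  fixes n k q :: nat
  assumes "finite (UNIV :: 'a::field set)" and "card (UNIV :: 'a set) = q"
    and "n \<ge> 1"
    and "q - 1 < 2 * k" and "k < q - 1"
  shows "dimF (code_hull n (PRM n k :: ((nat \<Rightarrow> 'a) \<Rightarrow> 'a) set))
           = dimF (PRM n k :: ((nat \<Rightarrow> 'a) \<Rightarrow> 'a) set) - (2 * k + 1 - (q - 1))
       \<and> dimF (PRM n k :: ((nat \<Rightarrow> 'a) \<Rightarrow> 'a) set) = (n + k) choose k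
       \<and> (let M = monomials n k - {excl_mon n k a | a. q - 1 - k \<le> a \<and> a \<le> k} in
            inj_on (ev_mon n :: _ \<Rightarrow> (nat \<Rightarrow> 'a) \<Rightarrow> 'a) M
          \<and> \<not> module.dependent fscale (ev_mon n ` M :: ((nat \<Rightarrow> 'a) \<Rightarrow> 'a) set)
          \<and> module.span fscale (ev_mon n ` M) = code_hull n (PRM n k :: ((nat \<Rightarrow> 'a) \<Rightarrow> 'a) set))"
proof -
  note fin = assms(1) and n = assms(3)
  have k: "k < card (UNIV :: 'a set) - 1" and k2: "card (UNIV :: 'a set) - 1 < 2 * k"
    using assms by simp_all
  define M where "M = monomials n k - excluded_monomials n k q"
  have M_eq: "monomials n k - {excl_mon n k a | a. q - 1 - k \<le> a \<and> a \<le> k} = M"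
    by (auto simp: M_def excluded_monomials_def)
  have M_sub: "M \<subseteq> monomials n k"
    by (auto simp: M_def)
  have hull: "VS.span (ev_mon n ` M) = (code_hull n (PRM n k) :: ((nat \<Rightarrow> 'a) \<Rightarrow> 'a) set)"
    using span_ev_mon_eq_code_hull_PRM[OF fin n k k2] by (simp add: M_def assms(2))
  have dim_PRM: "dimF (PRM n k :: ((nat \<Rightarrow> 'a) \<Rightarrow> 'a) set) = card (monomials n k)"
    unfolding PRM_def by (rule dimF_span_ev_mon[OF fin k order_refl])
  have "card M = card (monomials n k) - (2 * k + 1 - (q - 1))"
    using card_Diff_subset[OF finite_subset[OF excluded_monomials_subset[OF n] finite_monomials]
        excluded_monomials_subset[OF n]] card_excluded_monomials[OF n] assms(4,5)
    by (simp add: M_def)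
  then have dim_hull: "dimF (code_hull n (PRM n k) :: ((nat \<Rightarrow> 'a) \<Rightarrow> 'a) set)
      = card (monomials n k) - (2 * k + 1 - (q - 1))"
    using dimF_span_ev_mon[OF fin k M_sub] by (simp add: hull)
  show ?thesis
    unfolding Let_def M_eq
    using dim_PRM dim_hull card_monomials hull inj_on_subset[OF inj_on_ev_mon_monomials[OF fin k] M_sub]
      independent_ev_mon_subset[OF fin k M_sub]
    by auto
qed

end
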